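(* Let $S$ be an abundant semigroup and let $S^0$ be an adequate transversal of $S$. Let $R=\{x\in S: e_x=e_{\bar x}\}$ and $L=\{x\in S: f_x=f_{\bar x}\}$. Then $S^0$ is a quasi-ideal of $S$ (i.e. $S^0SS^0\subseteq S^0$) if and only if $RL\subseteq S^0$.
   Context: For a semigroup $S$, $\mathcal{R}^\ast=\{(a,b)\in S\times S: \text{for all } x,y\in S^1,\ xa=ya \iff xb=yb\}$ and $\mathcal{L}^\ast$ is defined dually. $S$ is abundant if every $\mathcal{R}^\ast$-class and every $\mathcal{L}^\ast$-class contains an idempotent; adequate if it is abundant and its idempotents commute. In an adequate semigroup $a^+$ and $a^\ast$ denote the unique idempotents in the $\mathcal{R}^\ast$-class and $\mathcal{L}^\ast$-class of $a$. A subsemigroup $U$ of an abundant semigroup $S$ is a $\ast$-subsemigroup if $U$ is abundant and $\mathcal{L}^\ast_U=\mathcal{L}^\ast_S\cap(U\times U)$, $\mathcal{R}^\ast_U=\mathcal{R}^\ast_S\cap(U\times U)$. An adequate $\ast$-subsemigroup $S^0$ of an abundant semigroup $S$ is an adequate transversal of $S$ if for each $x\in S$ there is a unique $\bar x\in S^0$ and idempotents $e,f$ of $S$ with $x=e\bar x f$, $e\,\mathcal{L}\,\bar x^+$ and $f\,\mathcal{R}\,\bar x^\ast$ ($\mathcal{L},\mathcal{R}$ Green's relations); such $e,f$ are then uniquely determined by $x$ and are denoted $e_x$, $f_x$. *)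

theory Defs
  imports Main
begin

text \<open>A semigroup is given by a carrier set S and a binary operation m, closed and associative on S.
  Elements of S^1 are represented as options: None is the adjoined identity.\<close>

definition semigroup_on :: "'a set \<Rightarrow> ('a \<Rightarrow> 'a \<Rightarrow> 'a) \<Rightarrow> bool" where
  "semigroup_on S m \<longleftrightarrow> (\<forall>a\<in>S. \<forall>b\<in>S. m a b \<in> S) \<and>
     (\<forall>a\<in>S. \<forall>b\<in>S. \<forall>c\<in>S. m (m a b) c = m a (m b c))"

definition S1 :: "'a set \<Rightarrow> 'a option set" where
  "S1 S = insert None (Some ` S)"

fun lm :: "('a \<Rightarrow> 'a \<Rightarrow> 'a) \<Rightarrow> 'a option \<Rightarrow> 'a \<Rightarrow> 'a" where
  "lm m None a = a"
| "lm m (Some x) a = m x a"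

fun rm :: "('a \<Rightarrow> 'a \<Rightarrow> 'a) \<Rightarrow> 'a \<Rightarrow> 'a option \<Rightarrow> 'a" where
  "rm m a None = a"
| "rm m a (Some x) = m a x"

definition idems :: "'a set \<Rightarrow> ('a \<Rightarrow> 'a \<Rightarrow> 'a) \<Rightarrow> 'a set" where
  "idems S m = {e\<in>S. m e e = e}"

definition Rstar :: "'a set \<Rightarrow> ('a \<Rightarrow> 'a \<Rightarrow> 'a) \<Rightarrow> 'a \<Rightarrow> 'a \<Rightarrow> bool" where
  "Rstar S m a b \<longleftrightarrow> a \<in> S \<and> b \<in> S \<and>
     (\<forall>x\<in>S1 S. \<forall>y\<in>S1 S. lm m x a = lm m y a \<longleftrightarrow> lm m x b = lm m y b)"

definition Lstar :: "'a set \<Rightarrow> ('a \<Rightarrow> 'a \<Rightarrow> 'a) \<Rightarrow> 'a \<Rightarrow> 'a \<Rightarrow> bool" where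
  "Lstar S m a b \<longleftrightarrow> a \<in> S \<and> b \<in> S \<and>
     (\<forall>x\<in>S1 S. \<forall>y\<in>S1 S. rm m a x = rm m a y \<longleftrightarrow> rm m b x = rm m b y)"

definition GreenL :: "'a set \<Rightarrow> ('a \<Rightarrow> 'a \<Rightarrow> 'a) \<Rightarrow> 'a \<Rightarrow> 'a \<Rightarrow> bool" where
  "GreenL S m a b \<longleftrightarrow> a \<in> S \<and> b \<in> S \<and> (\<lambda>x. lm m x a) ` S1 S = (\<lambda>x. lm m x b) ` S1 S"

definition GreenR :: "'a set \<Rightarrow> ('a \<Rightarrow> 'a \<Rightarrow> 'a) \<Rightarrow> 'a \<Rightarrow> 'a \<Rightarrow> bool" where
  "GreenR S m a b \<longleftrightarrow> a \<in> S \<and> b \<in> S \<and> (\<lambda>x. rm m a x) ` S1 S = (\<lambda>x. rm m b x) ` S1 S"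

definition abundant :: "'a set \<Rightarrow> ('a \<Rightarrow> 'a \<Rightarrow> 'a) \<Rightarrow> bool" where
  "abundant S m \<longleftrightarrow> semigroup_on S m \<and>
     (\<forall>a\<in>S. (\<exists>e\<in>idems S m. Rstar S m a e) \<and> (\<exists>e\<in>idems S m. Lstar S m a e))"

definition adequate :: "'a set \<Rightarrow> ('a \<Rightarrow> 'a \<Rightarrow> 'a) \<Rightarrow> bool" where
  "adequate S m \<longleftrightarrow> abundant S m \<and> (\<forall>e\<in>idems S m. \<forall>f\<in>idems S m. m e f = m f e)"

definition star_subsemigroup :: "'a set \<Rightarrow> ('a \<Rightarrow> 'a \<Rightarrow> 'a) \<Rightarrow> 'a set \<Rightarrow> bool" where
  "star_subsemigroup S m U \<longleftrightarrow> U \<subseteq> S \<and> (\<forall>a\<in>U. \<forall>b\<in>U. m a b \<in> U) \<and> abundant U m \<and>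
     (\<forall>a\<in>U. \<forall>b\<in>U. Lstar U m a b \<longleftrightarrow> Lstar S m a b) \<and>
     (\<forall>a\<in>U. \<forall>b\<in>U. Rstar U m a b \<longleftrightarrow> Rstar S m a b)"

definition plus :: "'a set \<Rightarrow> ('a \<Rightarrow> 'a \<Rightarrow> 'a) \<Rightarrow> 'a \<Rightarrow> 'a" where
  "plus U m a = (THE e. e \<in> idems U m \<and> Rstar U m a e)"

definition ast :: "'a set \<Rightarrow> ('a \<Rightarrow> 'a \<Rightarrow> 'a) \<Rightarrow> 'a \<Rightarrow> 'a" where
  "ast U m a = (THE e. e \<in> idems U m \<and> Lstar U m a e)"

definition tdec :: "'a set \<Rightarrow> ('a \<Rightarrow> 'a \<Rightarrow> 'a) \<Rightarrow> 'a set \<Rightarrow> 'a \<Rightarrow> 'a \<Rightarrow> 'a \<Rightarrow> 'a \<Rightarrow> bool" where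
  "tdec S m S0 x y e f \<longleftrightarrow> y \<in> S0 \<and> e \<in> idems S m \<and> f \<in> idems S m \<and>
     x = m (m e y) f \<and> GreenL S m e (plus S0 m y) \<and> GreenR S m f (ast S0 m y)"

definition adequate_transversal :: "'a set \<Rightarrow> ('a \<Rightarrow> 'a \<Rightarrow> 'a) \<Rightarrow> 'a set \<Rightarrow> bool" where
  "adequate_transversal S m S0 \<longleftrightarrow> abundant S m \<and> star_subsemigroup S m S0 \<and> adequate S0 m \<and>
     (\<forall>x\<in>S. \<exists>!y. \<exists>e f. tdec S m S0 x y e f)"

definition bar :: "'a set \<Rightarrow> ('a \<Rightarrow> 'a \<Rightarrow> 'a) \<Rightarrow> 'a set \<Rightarrow> 'a \<Rightarrow> 'a" where
  "bar S m S0 x = (THE y. \<exists>e f. tdec S m S0 x y e f)"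

definition ex :: "'a set \<Rightarrow> ('a \<Rightarrow> 'a \<Rightarrow> 'a) \<Rightarrow> 'a set \<Rightarrow> 'a \<Rightarrow> 'a" where
  "ex S m S0 x = (THE e. \<exists>f. tdec S m S0 x (bar S m S0 x) e f)"

definition fx :: "'a set \<Rightarrow> ('a \<Rightarrow> 'a \<Rightarrow> 'a) \<Rightarrow> 'a set \<Rightarrow> 'a \<Rightarrow> 'a" where
  "fx S m S0 x = (THE f. \<exists>e. tdec S m S0 x (bar S m S0 x) e f)"

end

theory Submission
  imports Defs
begin

text \<open>Write \<open>x = e\<^sub>x x' f\<^sub>x\<close> with \<open>x' = bar x\<close>, \<open>g = x'\<^sup>+\<close>, \<open>h = x'\<^sup>*\<close>. For \<open>x \<in> R\<close> the
  left factor \<open>e\<^sub>x = e\<^bsub>x'\<^esub>\<close> is \<open>g\<close>, which \<open>x'\<close> absorbs, so \<open>x = x' f\<^sub>x\<close>; dually \<open>x = e\<^sub>x x'\<close> for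
  \<open>x \<in> L\<close>. Hence \<open>r l = r' (f\<^sub>r e\<^sub>l) l'\<close>, which lies in \<open>S\<^sup>0\<close> when \<open>S\<^sup>0\<close> is a quasi-ideal.
  Conversely \<open>S\<^sup>0 \<subseteq> R \<inter> L\<close>, and if \<open>s = e y f\<close> then \<open>e = e g g\<close> is the decomposition of \<open>e\<close>,
  whose right factor \<open>g\<close> is also that of \<open>g \<in> S\<^sup>0\<close>; so \<open>e \<in> L\<close>, dually \<open>f \<in> R\<close>, and
  \<open>a s b = (a e) y (f b)\<close> is a product of elements of \<open>S\<^sup>0\<close> whenever \<open>R L \<subseteq> S\<^sup>0\<close>.\<close>

lemma Rstar_refl: "a \<in> U \<Longrightarrow> Rstar U m a a"
  by (simp add: Rstar_def)

lemma Lstar_refl: "a \<in> U \<Longrightarrow> Lstar U m a a"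
  by (simp add: Lstar_def)

lemma Rstar_left_cancel:
  assumes "Rstar U m a b" "x \<in> U" "y \<in> U"
  shows "m x a = m y a \<longleftrightarrow> m x b = m y b"
proof -
  have "Some x \<in> S1 U" "Some y \<in> S1 U" using assms(2,3) by (auto simp: S1_def)
  then show ?thesis using assms(1) unfolding Rstar_def by (metis lm.simps(2))
qed

lemma Rstar_left_identity:
  assumes "Rstar U m a b" "x \<in> U"
  shows "m x a = a \<longleftrightarrow> m x b = b"
proof -
  have "Some x \<in> S1 U" "None \<in> S1 U" using assms(2) by (auto simp: S1_def)
  then show ?thesis using assms(1) unfolding Rstar_def by (metis lm.simps)
qed

lemma Lstar_right_cancel:
  assumes "Lstar U m a b" "x \<in> U" "y \<in> U"
  shows "m a x = m a y \<longleftrightarrow> m b x = m b y"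
proof -
  have "Some x \<in> S1 U" "Some y \<in> S1 U" using assms(2,3) by (auto simp: S1_def)
  then show ?thesis using assms(1) unfolding Lstar_def by (metis rm.simps(2))
qed

lemma Lstar_right_identity:
  assumes "Lstar U m a b" "x \<in> U"
  shows "m a x = a \<longleftrightarrow> m b x = b"
proof -
  have "Some x \<in> S1 U" "None \<in> S1 U" using assms(2) by (auto simp: S1_def)
  then show ?thesis using assms(1) unfolding Lstar_def by (metis rm.simps)
qed

lemma Rstar_idem_left_identity:
  assumes "Rstar U m a e" "e \<in> idems U m"
  shows "m e a = a"
  using Rstar_left_identity[OF assms(1)] assms(2) by (simp add: idems_def)

lemma Lstar_idem_right_identity:
  assumes "Lstar U m a e" "e \<in> idems U m"
  shows "m a e = a"
  using Lstar_right_identity[OF assms(1)] assms(2) by (simp add: idems_def)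

locale carrier_semigroup =
  fixes S :: "'a set" and m :: "'a \<Rightarrow> 'a \<Rightarrow> 'a"
  assumes semigroup: "semigroup_on S m"
begin

lemma closed: "a \<in> S \<Longrightarrow> b \<in> S \<Longrightarrow> m a b \<in> S"
  using semigroup unfolding semigroup_on_def by blast

lemma assoc: "a \<in> S \<Longrightarrow> b \<in> S \<Longrightarrow> c \<in> S \<Longrightarrow> m (m a b) c = m a (m b c)"
  using semigroup unfolding semigroup_on_def by blast

lemma GreenL_idem_right_identity:
  assumes "GreenL S m a e" "e \<in> idems S m"
  shows "m a e = a"
proof -
  have "a \<in> (\<lambda>x. lm m x a) ` S1 S" by (force simp: S1_def)
  then obtain t where t: "t \<in> S1 S" "a = lm m t e" using assms(1) by (auto simp: GreenL_def)
  have e: "e \<in> S" "m e e = e" using assms(2) by (auto simp: idems_def)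
  show ?thesis
  proof (cases t)
    case None then show ?thesis using t e by simp
  next
    case (Some u) then show ?thesis using t e by (auto simp: S1_def assoc)
  qed
qed

lemma GreenR_idem_left_identity:
  assumes "GreenR S m a f" "f \<in> idems S m"
  shows "m f a = a"
proof -
  have "a \<in> (\<lambda>x. rm m a x) ` S1 S" by (force simp: S1_def)
  then obtain t where t: "t \<in> S1 S" "a = rm m f t" using assms(1) by (auto simp: GreenR_def)
  have f: "f \<in> S" "m f f = f" using assms(2) by (auto simp: idems_def)
  show ?thesis
  proof (cases t)
    case None then show ?thesis using t f by simp
  next
    case (Some u) then show ?thesis using t f by (auto simp: S1_def simp flip: assoc)
  qed
qed

lemma GreenL_sym: "GreenL S m a b \<Longrightarrow> GreenL S m b a"
  by (auto simp: GreenL_def)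

lemma GreenR_sym: "GreenR S m a b \<Longrightarrow> GreenR S m b a"
  by (auto simp: GreenR_def)

end

locale adequate_carrier =
  fixes U :: "'a set" and m :: "'a \<Rightarrow> 'a \<Rightarrow> 'a"
  assumes adequate: "adequate U m"
begin

lemma idems_commute: "e \<in> idems U m \<Longrightarrow> f \<in> idems U m \<Longrightarrow> m e f = m f e"
  using adequate unfolding adequate_def by blast

lemma Rstar_idem_unique:
  assumes "e \<in> idems U m" "Rstar U m a e" "e' \<in> idems U m" "Rstar U m a e'"
  shows "e = e'"
proof -
  have U: "e \<in> U" "e' \<in> U" using assms by (auto simp: idems_def)
  have "m e' e = e"
    using Rstar_left_identity[OF assms(2) U(2)] Rstar_idem_left_identity[OF assms(4,3)] by simp
  moreover have "m e e' = e'"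
    using Rstar_left_identity[OF assms(4) U(1)] Rstar_idem_left_identity[OF assms(2,1)] by simp
  ultimately show ?thesis using idems_commute assms(1,3) by simp
qed

lemma Lstar_idem_unique:
  assumes "e \<in> idems U m" "Lstar U m a e" "e' \<in> idems U m" "Lstar U m a e'"
  shows "e = e'"
proof -
  have U: "e \<in> U" "e' \<in> U" using assms by (auto simp: idems_def)
  have "m e e' = e"
    using Lstar_right_identity[OF assms(2) U(2)] Lstar_idem_right_identity[OF assms(4,3)] by simp
  moreover have "m e' e = e'"
    using Lstar_right_identity[OF assms(4) U(1)] Lstar_idem_right_identity[OF assms(2,1)] by simp
  ultimately show ?thesis using idems_commute assms(1,3) by simp
qed

lemma plus_props:
  assumes "a \<in> U"
  shows "plus U m a \<in> idems U m" "Rstar U m a (plus U m a)"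
proof -
  obtain e where e: "e \<in> idems U m" "Rstar U m a e"
    using adequate assms unfolding adequate_def abundant_def by blast
  have "plus U m a \<in> idems U m \<and> Rstar U m a (plus U m a)"
    unfolding plus_def by (rule theI[of _ e]) (use e Rstar_idem_unique in blast)+
  then show "plus U m a \<in> idems U m" "Rstar U m a (plus U m a)" by auto
qed

lemma ast_props:
  assumes "a \<in> U"
  shows "ast U m a \<in> idems U m" "Lstar U m a (ast U m a)"
proof -
  obtain e where e: "e \<in> idems U m" "Lstar U m a e"
    using adequate assms unfolding adequate_def abundant_def by blast
  have "ast U m a \<in> idems U m \<and> Lstar U m a (ast U m a)"
    unfolding ast_def by (rule theI[of _ e]) (use e Lstar_idem_unique in blast)+
  then show "ast U m a \<in> idems U m" "Lstar U m a (ast U m a)" by auto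
qed

lemma plus_mult_self: "a \<in> U \<Longrightarrow> m (plus U m a) a = a"
  by (rule Rstar_idem_left_identity[OF plus_props(2,1)])

lemma mult_ast_self: "a \<in> U \<Longrightarrow> m a (ast U m a) = a"
  by (rule Lstar_idem_right_identity[OF ast_props(2,1)])

lemma plus_idem:
  assumes "e \<in> idems U m"
  shows "plus U m e = e"
proof -
  have "e \<in> U" using assms by (simp add: idems_def)
  then show ?thesis
    using plus_props Rstar_idem_unique assms Rstar_refl[of e U m] by metis
qed

lemma ast_idem:
  assumes "e \<in> idems U m"
  shows "ast U m e = e"
proof -
  have "e \<in> U" using assms by (simp add: idems_def)
  then show ?thesis
    using ast_props Lstar_idem_unique assms Lstar_refl[of e U m] by metis
qed

end

locale transversal_setting =
  fixes S :: "'a set" and m :: "'a \<Rightarrow> 'a \<Rightarrow> 'a" and S0 :: "'a set"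
  assumes transversal: "adequate_transversal S m S0"
begin

sublocale carrier_semigroup S m
  using transversal by unfold_locales (simp add: adequate_transversal_def abundant_def)

sublocale S0: adequate_carrier S0 m
  using transversal by unfold_locales (simp add: adequate_transversal_def)

lemma star_subsemigroup: "star_subsemigroup S m S0"
  using transversal by (simp add: adequate_transversal_def)

lemma S0_subset: "S0 \<subseteq> S"
  using star_subsemigroup by (simp add: star_subsemigroup_def)

lemma S0_closed: "a \<in> S0 \<Longrightarrow> b \<in> S0 \<Longrightarrow> m a b \<in> S0"
  using star_subsemigroup by (simp add: star_subsemigroup_def)

lemma idems_S0_subset: "idems S0 m \<subseteq> idems S m"
  using S0_subset by (auto simp: idems_def)

lemma plus_mem:
  assumes "y \<in> S0"
  shows "plus S0 m y \<in> idems S0 m" "plus S0 m y \<in> idems S m" "plus S0 m y \<in> S"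
  using S0.plus_props(1)[OF assms] idems_S0_subset by (auto simp: idems_def)

lemma ast_mem:
  assumes "y \<in> S0"
  shows "ast S0 m y \<in> idems S0 m" "ast S0 m y \<in> idems S m" "ast S0 m y \<in> S"
  using S0.ast_props(1)[OF assms] idems_S0_subset by (auto simp: idems_def)

lemma Rstar_plus: "y \<in> S0 \<Longrightarrow> Rstar S m y (plus S0 m y)"
  using star_subsemigroup S0.plus_props plus_mem(1)
  unfolding star_subsemigroup_def idems_def by blast

lemma Lstar_ast: "y \<in> S0 \<Longrightarrow> Lstar S m y (ast S0 m y)"
  using star_subsemigroup S0.ast_props ast_mem(1)
  unfolding star_subsemigroup_def idems_def by blast

lemma tdec_parts:
  assumes "tdec S m S0 x y e f"
  shows "y \<in> S0" "y \<in> S" "e \<in> S" "f \<in> S" "m e e = e" "m f f = f" "x = m (m e y) f"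
    and "m e (plus S0 m y) = e" "m (plus S0 m y) e = plus S0 m y"
    and "m (ast S0 m y) f = f" "m f (ast S0 m y) = ast S0 m y"
proof -
  have t: "y \<in> S0" "e \<in> idems S m" "f \<in> idems S m" "x = m (m e y) f"
      "GreenL S m e (plus S0 m y)" "GreenR S m f (ast S0 m y)"
    using assms by (auto simp: tdec_def)
  show "y \<in> S0" "x = m (m e y) f" using t by auto
  show "y \<in> S" "e \<in> S" "f \<in> S" "m e e = e" "m f f = f"
    using t S0_subset by (auto simp: idems_def)
  show "m e (plus S0 m y) = e" "m (plus S0 m y) e = plus S0 m y"
    using GreenL_idem_right_identity[OF t(5)] GreenL_idem_right_identity[OF GreenL_sym[OF t(5)]]
      plus_mem(2)[OF t(1)] t(2) by auto
  show "m (ast S0 m y) f = f" "m f (ast S0 m y) = ast S0 m y"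
    using GreenR_idem_left_identity[OF t(6)] GreenR_idem_left_identity[OF GreenR_sym[OF t(6)]]
      ast_mem(2)[OF t(1)] t(3) by auto
qed

lemma tdec_mem: "tdec S m S0 x y e f \<Longrightarrow> x \<in> S"
  using tdec_parts closed by metis

lemma tdec_mult_ast:
  assumes "tdec S m S0 x y e f"
  shows "m x (ast S0 m y) = m e y"
proof -
  note t = tdec_parts[OF assms] and h = ast_mem(3)[OF tdec_parts(1)[OF assms]]
  have "m x (ast S0 m y) = m (m e y) (m f (ast S0 m y))"
    using t h by (simp add: assoc closed)
  also have "\<dots> = m e (m y (ast S0 m y))"
    using t h by (simp add: assoc)
  finally show ?thesis
    using S0.mult_ast_self[OF t(1)] by simp
qed

lemma tdec_plus_mult:
  assumes "tdec S m S0 x y e f"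
  shows "m (plus S0 m y) x = m y f"
proof -
  note t = tdec_parts[OF assms] and g = plus_mem(3)[OF tdec_parts(1)[OF assms]]
  have "m (plus S0 m y) x = m (m (plus S0 m y) e) (m y f)"
    unfolding t(7) using t(2-4) g by (simp add: assoc closed)
  also have "\<dots> = m (m (plus S0 m y) y) f"
    using t g by (simp add: assoc)
  finally show ?thesis
    using S0.plus_mult_self[OF t(1)] by simp
qed

lemma tdec_ex_mult: "tdec S m S0 x y e f \<Longrightarrow> m e x = x"
  using tdec_parts[of x y e f] by (metis assoc closed)

lemma tdec_mult_fx: "tdec S m S0 x y e f \<Longrightarrow> m x f = x"
  using tdec_parts[of x y e f] by (metis assoc closed)

lemma tdec_ex_unique:
  assumes A: "tdec S m S0 x y e f" and B: "tdec S m S0 x y e' f'"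
  shows "e = e'"
proof -
  let ?g = "plus S0 m y" and ?h = "ast S0 m y"
  note a = tdec_parts[OF A] and b = tdec_parts[OF B] and g = plus_mem(3)[OF a(1)]
  \<comment> \<open>\<open>x h = e y\<close> forgets \<open>f\<close>, and \<open>y \<R>\<^sup>* g\<close> lets us cancel \<open>y\<close> on the right.\<close>
  have "m e' (m x ?h) = m x ?h"
    using tdec_ex_mult[OF B] a b ast_mem(3)[OF a(1)] tdec_mem[OF A] by (metis assoc)
  then have "m (m e' e) y = m e y"
    using tdec_mult_ast[OF A] a b by (simp add: assoc)
  then have "m (m e' e) ?g = m e ?g"
    using Rstar_left_cancel[OF Rstar_plus[OF a(1)]] a b closed by blast
  then have "m e' e = e"
    using a b g by (simp add: assoc)
  moreover have "m e' e = e'"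
    using a b g by (metis assoc)
  ultimately show ?thesis by simp
qed

lemma tdec_fx_unique:
  assumes A: "tdec S m S0 x y e f" and B: "tdec S m S0 x y e' f'"
  shows "f = f'"
proof -
  let ?g = "plus S0 m y" and ?h = "ast S0 m y"
  note a = tdec_parts[OF A] and b = tdec_parts[OF B] and h = ast_mem(3)[OF a(1)]
  have "m (m ?g x) f' = m ?g x"
    using tdec_mult_fx[OF B] a b plus_mem(3)[OF a(1)] tdec_mem[OF A] by (metis assoc)
  then have "m y (m f f') = m y f"
    using tdec_plus_mult[OF A] a b by (simp add: assoc)
  then have "m ?h (m f f') = m ?h f"
    using Lstar_right_cancel[OF Lstar_ast[OF a(1)]] a b closed by blast
  then have "m f f' = f"
    using a b h by (simp flip: assoc)
  moreover have "m f f' = f'"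
    using a b h by (metis assoc)
  ultimately show ?thesis by simp
qed

lemma tdec_unique_decomposition: "x \<in> S \<Longrightarrow> \<exists>!y. \<exists>e f. tdec S m S0 x y e f"
  using transversal by (simp add: adequate_transversal_def)

lemma bar_eqI:
  assumes "tdec S m S0 x y e f"
  shows "bar S m S0 x = y"
  unfolding bar_def
  using the1_equality[OF tdec_unique_decomposition[OF tdec_mem[OF assms]]] assms by blast

lemma ex_eqI:
  assumes "tdec S m S0 x y e f"
  shows "ex S m S0 x = e"
  unfolding ex_def bar_eqI[OF assms]
  using assms tdec_ex_unique by blast

lemma fx_eqI:
  assumes "tdec S m S0 x y e f"
  shows "fx S m S0 x = f"
  unfolding fx_def bar_eqI[OF assms]
  using assms tdec_fx_unique by blast

lemma tdec_S0:
  assumes "y \<in> S0"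
  shows "tdec S m S0 y y (plus S0 m y) (ast S0 m y)"
  using assms plus_mem[OF assms] ast_mem[OF assms] S0.plus_mult_self S0.mult_ast_self
  by (auto simp: tdec_def GreenL_def GreenR_def)

lemma tdec_GreenL_idem:
  assumes "g \<in> idems S0 m" "e \<in> idems S m" "GreenL S m e g"
  shows "tdec S m S0 e g e g"
proof -
  have "g \<in> S0" "m e g = e"
    using assms GreenL_idem_right_identity idems_S0_subset by (auto simp: idems_def)
  then show ?thesis
    using assms S0_subset S0.plus_idem S0.ast_idem idems_S0_subset
    by (auto simp: tdec_def GreenR_def)
qed

lemma tdec_GreenR_idem:
  assumes "h \<in> idems S0 m" "f \<in> idems S m" "GreenR S m f h"
  shows "tdec S m S0 f h h f"
proof -
  have "h \<in> S0" "m h h = h" "m h f = f"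
    using assms GreenR_idem_left_identity idems_S0_subset by (auto simp: idems_def)
  then show ?thesis
    using assms S0_subset S0.plus_idem S0.ast_idem idems_S0_subset
    by (auto simp: tdec_def GreenL_def)
qed

definition Rset :: "'a set" where
  "Rset = {x \<in> S. ex S m S0 x = ex S m S0 (bar S m S0 x)}"

definition Lset :: "'a set" where
  "Lset = {x \<in> S. fx S m S0 x = fx S m S0 (bar S m S0 x)}"

lemma S0_subset_Rset: "S0 \<subseteq> Rset"
  unfolding Rset_def using bar_eqI[OF tdec_S0] S0_subset by auto

lemma S0_subset_Lset: "S0 \<subseteq> Lset"
  unfolding Lset_def using bar_eqI[OF tdec_S0] S0_subset by auto

lemma Rset_factor:
  assumes "r \<in> Rset"
  obtains y f where "y \<in> S0" "f \<in> S" "r = m y f"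
proof -
  obtain y e f where t: "tdec S m S0 r y e f"
    using assms tdec_unique_decomposition unfolding Rset_def by blast
  have "e = plus S0 m y"
    using assms ex_eqI[OF t] bar_eqI[OF t] ex_eqI[OF tdec_S0[OF tdec_parts(1)[OF t]]]
    unfolding Rset_def by simp
  then have "r = m y f"
    using tdec_parts[OF t] S0.plus_mult_self by simp
  then show ?thesis using that tdec_parts[OF t] by blast
qed

lemma Lset_factor:
  assumes "l \<in> Lset"
  obtains e y where "e \<in> S" "y \<in> S0" "l = m e y"
proof -
  obtain y e f where t: "tdec S m S0 l y e f"
    using assms tdec_unique_decomposition unfolding Lset_def by blast
  have "f = ast S0 m y"
    using assms fx_eqI[OF t] bar_eqI[OF t] fx_eqI[OF tdec_S0[OF tdec_parts(1)[OF t]]]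
    unfolding Lset_def by simp
  then have "l = m e y"
    using tdec_parts[OF t] S0.mult_ast_self by (simp add: assoc)
  then show ?thesis using that tdec_parts[OF t] by blast
qed

lemma tdec_ex_mem_Lset:
  assumes "tdec S m S0 x y e f"
  shows "e \<in> Lset"
proof -
  have g: "plus S0 m y \<in> idems S0 m" using plus_mem tdec_parts(1)[OF assms] by blast
  then have t: "tdec S m S0 e (plus S0 m y) e (plus S0 m y)"
    using tdec_GreenL_idem assms by (auto simp: tdec_def)
  show ?thesis
    unfolding Lset_def using fx_eqI[OF t] bar_eqI[OF t] fx_eqI[OF tdec_S0] g
      S0.ast_idem[OF g] tdec_parts(3)[OF assms] by (auto simp: idems_def)
qed

lemma tdec_fx_mem_Rset:
  assumes "tdec S m S0 x y e f"
  shows "f \<in> Rset"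
proof -
  have h: "ast S0 m y \<in> idems S0 m" using ast_mem tdec_parts(1)[OF assms] by blast
  then have t: "tdec S m S0 f (ast S0 m y) (ast S0 m y) f"
    using tdec_GreenR_idem assms by (auto simp: tdec_def)
  show ?thesis
    unfolding Rset_def using ex_eqI[OF t] bar_eqI[OF t] ex_eqI[OF tdec_S0] h
      S0.plus_idem[OF h] tdec_parts(4)[OF assms] by (auto simp: idems_def)
qed

lemma RL_subset_S0_if_quasi_ideal:
  assumes quasi_ideal: "\<forall>a\<in>S0. \<forall>s\<in>S. \<forall>b\<in>S0. m (m a s) b \<in> S0"
    and "r \<in> Rset" "l \<in> Lset"
  shows "m r l \<in> S0"
proof -
  obtain y f where r: "y \<in> S0" "f \<in> S" "r = m y f" using Rset_factor assms(2) .
  obtain e z where l: "e \<in> S" "z \<in> S0" "l = m e z" using Lset_factor assms(3) .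
  have "y \<in> S" "z \<in> S" using r l S0_subset by auto
  then have "m r l = m (m y (m f e)) z"
    using r l by (simp add: assoc closed)
  then show ?thesis using quasi_ideal r l closed by simp
qed

lemma quasi_ideal_if_RL_subset_S0:
  assumes RL: "\<forall>r\<in>Rset. \<forall>l\<in>Lset. m r l \<in> S0"
    and "a \<in> S0" "s \<in> S" "b \<in> S0"
  shows "m (m a s) b \<in> S0"
proof -
  obtain y e f where t: "tdec S m S0 s y e f"
    using tdec_unique_decomposition assms(3) by blast
  note parts = tdec_parts[OF t]
  have "a \<in> S" "b \<in> S" using assms(2,4) S0_subset by auto
  then have eq: "m (m a s) b = m (m (m a e) y) (m f b)"
    using parts by (simp add: assoc closed)
  have "m a e \<in> S0" "m f b \<in> S0"
    using RL S0_subset_Rset S0_subset_Lset assms(2,4) tdec_ex_mem_Lset[OF t] tdec_fx_mem_Rset[OF t]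
    by blast+
  then show ?thesis
    unfolding eq using parts(1) S0_closed by blast
qed

end

theorem lemma1p4:
  fixes S S0 :: "'a set" and m :: "'a \<Rightarrow> 'a \<Rightarrow> 'a"
  assumes "abundant S m"
    and "adequate_transversal S m S0"
  defines "R \<equiv> {x\<in>S. ex S m S0 x = ex S m S0 (bar S m S0 x)}"
    and "L \<equiv> {x\<in>S. fx S m S0 x = fx S m S0 (bar S m S0 x)}"
  shows "(\<forall>a\<in>S0. \<forall>s\<in>S. \<forall>b\<in>S0. m (m a s) b \<in> S0) \<longleftrightarrow> (\<forall>r\<in>R. \<forall>l\<in>L. m r l \<in> S0)"
proof -
  interpret transversal_setting S m S0
    using assms(2) by unfold_locales
  have "R = Rset" "L = Lset"
    unfolding R_def L_def Rset_def Lset_def by simp_all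
  then show ?thesis
    using RL_subset_S0_if_quasi_ideal quasi_ideal_if_RL_subset_S0 by blast
qed

end
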